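(* Let $\varepsilon>0$ and let $G$ be an $n$-vertex graph with $e(G)\geq 2n/\varepsilon$. Then there exists a set $\mathcal{M}$ of edge-disjoint matchings in $G$ such that (M1) $|\mathcal{M}|\leq 2n$; (M2) $\left|E(G)\setminus\bigcup_{M\in\mathcal{M}}M\right|\leq 2\varepsilon e(G)$; and (M3) $|M|\geq\frac{\varepsilon e(G)}{2n}$ for every $M\in\mathcal{M}$.
   Context: A matching is a set of pairwise vertex-disjoint edges; $e(G)$ is the number of edges of $G$. *)

theory Defs
  imports Complex_Main "HOL-Library.Disjoint_Sets"
begin

definition simple_graph :: "'a set \<Rightarrow> 'a set set \<Rightarrow> bool" where
  "simple_graph V E \<longleftrightarrow> finite V \<and> (\<forall>e\<in>E. e \<subseteq> V \<and> card e = 2)"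

definition matching_in :: "'a set set \<Rightarrow> 'a set set \<Rightarrow> bool" where
  "matching_in E M \<longleftrightarrow> M \<subseteq> E \<and> (\<forall>e\<in>M. \<forall>f\<in>M. e \<noteq> f \<longrightarrow> e \<inter> f = {})"

end

theory Submission
  imports Defs
begin

text \<open>Every edge meets fewer than \<open>2n\<close> other edges, so colouring the edges greedily gives a
  proper edge colouring with \<open>2n\<close> colours; its colour classes are edge-disjoint matchings
  covering \<open>E\<close>. Keep the classes with at least \<open>t = \<epsilon> e(G) / 2n\<close> edges: the discarded
  classes are at most \<open>2n\<close> in number and contain fewer than \<open>t\<close> edges each, so together
  fewer than \<open>\<epsilon> e(G)\<close> edges.\<close>

definition proper_edge_colouring :: "'a set set \<Rightarrow> ('a set \<Rightarrow> nat) \<Rightarrow> bool" where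
  "proper_edge_colouring E c \<longleftrightarrow> (\<forall>e\<in>E. \<forall>f\<in>E. e \<noteq> f \<longrightarrow> e \<inter> f \<noteq> {} \<longrightarrow> c e \<noteq> c f)"

lemma simple_graph_finite_edges:
  assumes "simple_graph V E"
  shows "finite E"
proof (rule finite_subset)
  show "E \<subseteq> Pow V" using assms by (auto simp: simple_graph_def)
  show "finite (Pow V)" using assms by (simp add: simple_graph_def)
qed

lemma simple_graph_subset:
  "simple_graph V E \<Longrightarrow> F \<subseteq> E \<Longrightarrow> simple_graph V F"
  by (auto simp: simple_graph_def)

lemma card_edges_at_vertex_le:
  assumes "simple_graph V E" "u \<in> V"
  shows "card {f\<in>E. u \<in> f} \<le> card V - 1"
proof -
  have "{f\<in>E. u \<in> f} \<subseteq> (\<lambda>w. {u, w}) ` (V - {u})"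
  proof
    fix f assume f: "f \<in> {f\<in>E. u \<in> f}"
    then have "f \<subseteq> V" "card f = 2" using assms by (auto simp: simple_graph_def)
    then obtain a b where "f = {a, b}" "a \<noteq> b" by (auto simp: card_2_iff)
    with f \<open>f \<subseteq> V\<close> show "f \<in> (\<lambda>w. {u, w}) ` (V - {u})" by auto
  qed
  then have "card {f\<in>E. u \<in> f} \<le> card ((\<lambda>w. {u, w}) ` (V - {u}))"
    using assms by (intro card_mono) (auto simp: simple_graph_def)
  also have "\<dots> \<le> card (V - {u})" by (rule card_image_le) (use assms in \<open>simp add: simple_graph_def\<close>)
  also have "\<dots> = card V - 1" using assms(2) by simp
  finally show ?thesis .
qed

lemma card_edges_meeting_edge_less:
  assumes "simple_graph V E" "e \<in> E"
  shows "card {f\<in>E. f \<inter> e \<noteq> {}} < 2 * card V"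
proof -
  obtain u v where uv: "e = {u, v}" "u \<in> V" "v \<in> V"
    using assms by (auto simp: simple_graph_def card_2_iff)
  have "{f\<in>E. f \<inter> e \<noteq> {}} = {f\<in>E. u \<in> f} \<union> {f\<in>E. v \<in> f}" using uv by auto
  then have "card {f\<in>E. f \<inter> e \<noteq> {}} \<le> card {f\<in>E. u \<in> f} + card {f\<in>E. v \<in> f}"
    by (simp add: card_Un_le)
  also have "\<dots> \<le> (card V - 1) + (card V - 1)"
    using assms(1) uv by (intro add_mono card_edges_at_vertex_le)
  also have "\<dots> < 2 * card V"
    using uv assms(1) card_gt_0_iff[of V] by (auto simp: simple_graph_def)
  finally show ?thesis .
qed

lemma proper_edge_colouring_insert:
  assumes "proper_edge_colouring F c" "e \<notin> F" "\<forall>f\<in>F. f \<inter> e \<noteq> {} \<longrightarrow> c f \<noteq> k"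
  shows "proper_edge_colouring (insert e F) (c(e := k))"
  using assms unfolding proper_edge_colouring_def by (auto simp: Int_commute)

lemma greedy_edge_colouring:
  assumes "simple_graph V E"
  shows "\<exists>c. proper_edge_colouring E c \<and> (\<forall>e\<in>E. c e < 2 * card V)"
  using simple_graph_finite_edges[OF assms] assms
proof (induction E rule: finite_induct)
  case empty
  show ?case by (simp add: proper_edge_colouring_def)
next
  case (insert e F)
  then obtain c where c: "proper_edge_colouring F c" "\<forall>f\<in>F. c f < 2 * card V"
    using simple_graph_subset by blast
  define N where "N = {f\<in>F. f \<inter> e \<noteq> {}}"
  have "card (c ` N) \<le> card N"
    using insert.hyps(1) by (intro card_image_le) (simp add: N_def)
  also have "\<dots> \<le> card {f\<in>insert e F. f \<inter> e \<noteq> {}}"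
    using insert.hyps(1) by (intro card_mono) (auto simp: N_def)
  also have "\<dots> < 2 * card V"
    using insert.prems by (intro card_edges_meeting_edge_less) auto
  finally have "\<not> {..<2 * card V} \<subseteq> c ` N"
    using card_mono[of "c ` N" "{..<2 * card V}"] insert.hyps(1) by (auto simp: N_def)
  then obtain k where k: "k < 2 * card V" "k \<notin> c ` N" by auto
  have "proper_edge_colouring (insert e F) (c(e := k))"
    using k(2) c(1) insert.hyps(2) by (intro proper_edge_colouring_insert) (auto simp: N_def)
  moreover have "\<forall>f\<in>insert e F. (c(e := k)) f < 2 * card V" using c(2) k(1) by simp
  ultimately show ?case by blast
qed

lemma matching_in_colour_class:
  "proper_edge_colouring E c \<Longrightarrow> matching_in E {e\<in>E. c e = i}"
  by (auto simp: proper_edge_colouring_def matching_in_def)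

lemma card_in_small_classes_le:
  fixes c :: "'a \<Rightarrow> nat" and t :: real
  assumes "finite A" "\<forall>x\<in>A. c x < k" "t \<ge> 0"
  shows "real (card {x\<in>A. real (card {y\<in>A. c y = c x}) < t}) \<le> real k * t"
proof -
  define C where "C i = {y\<in>A. c y = i}" for i
  define I where "I = {i\<in>{..<k}. real (card (C i)) < t}"
  have "{x\<in>A. real (card {y\<in>A. c y = c x}) < t} = (\<Union>i\<in>I. C i)"
    using assms(2) by (auto simp: I_def C_def)
  then have "real (card {x\<in>A. real (card {y\<in>A. c y = c x}) < t}) \<le> real (\<Sum>i\<in>I. card (C i))"
    by (intro of_nat_mono) (simp add: card_UN_le I_def)
  also have "\<dots> = (\<Sum>i\<in>I. real (card (C i)))" by simp
  also have "\<dots> \<le> real (card I) * t"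
    using sum_mono[of I "\<lambda>i. real (card (C i))" "\<lambda>_. t"] by (simp add: I_def)
  also have "\<dots> \<le> real k * t"
    using card_mono[of "{..<k}" I] assms(3) by (intro mult_right_mono) (auto simp: I_def)
  finally show ?thesis .
qed

theorem corollary21:
  fixes V :: "'a set" and E :: "'a set set" and n :: nat and \<epsilon> :: real
  assumes "simple_graph V E" and "card V = n" and "\<epsilon> > 0"
    and "real (card E) \<ge> 2 * real n / \<epsilon>"
  shows "\<exists>\<M> :: 'a set set set.
           (\<forall>M\<in>\<M>. matching_in E M) \<and> disjoint \<M> \<and>
           card \<M> \<le> 2 * n \<and>
           real (card (E - \<Union>\<M>)) \<le> 2 * \<epsilon> * real (card E) \<and>
           (\<forall>M\<in>\<M>. real (card M) \<ge> \<epsilon> * real (card E) / (2 * real n))"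
proof -
  obtain c where c: "proper_edge_colouring E c" "\<forall>e\<in>E. c e < 2 * n"
    using greedy_edge_colouring[OF assms(1)] assms(2) by blast
  define t where "t = \<epsilon> * real (card E) / (2 * real n)"
  define C where "C i = {e\<in>E. c e = i}" for i
  define I where "I = {i. i < 2 * n \<and> t \<le> real (card (C i))}"
  define \<M> where "\<M> = C ` I"
  have "\<forall>M\<in>\<M>. matching_in E M"
    using c(1) by (simp add: \<M>_def C_def matching_in_colour_class)
  moreover have "disjoint \<M>"
    by (auto simp: disjoint_def \<M>_def C_def)
  moreover have "card \<M> \<le> 2 * n"
  proof -
    have "card \<M> \<le> card I" by (simp add: \<M>_def card_image_le I_def)
    also have "\<dots> \<le> card {..<2 * n}" by (intro card_mono) (auto simp: I_def)
    finally show ?thesis by simp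
  qed
  moreover have "real (card (E - \<Union>\<M>)) \<le> 2 * \<epsilon> * real (card E)"
  proof -
    have "E - \<Union>\<M> = {e\<in>E. real (card {f\<in>E. c f = c e}) < t}"
      using c(2) by (auto simp: \<M>_def I_def C_def)
    moreover have "real (card {e\<in>E. real (card {f\<in>E. c f = c e}) < t}) \<le> real (2 * n) * t"
      using assms(3) simple_graph_finite_edges[OF assms(1)] c(2)
      by (intro card_in_small_classes_le) (simp_all add: t_def)
    ultimately have "real (card (E - \<Union>\<M>)) \<le> real (2 * n) * t" by simp
    also have "\<dots> \<le> 2 * \<epsilon> * real (card E)"
      using assms(3) by (cases "n = 0") (auto simp: t_def)
    finally show ?thesis .
  qed
  moreover have "\<forall>M\<in>\<M>. real (card M) \<ge> t" by (simp add: \<M>_def I_def)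
  ultimately show ?thesis unfolding t_def by blast
qed

end
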